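(* Let $f, g: A \to B$ be maps of $\mathbf{PR}$. If $\mathbf{PR}$ derives the equation $\mathrm{true}_A = \;\doteq_B \circ (f \times g)\circ \Delta_A : A \to \mathbb{N}$ (in free variables: $[f(a) \doteq_B g(a)] = \mathrm{true}_A$), then $\mathbf{PR}$ derives $f = g: A \to B$.
   Context: $\mathbf{PR}$ is the formal (syntactic) category defined as follows. Objects: generated from a terminal object $\mathbb{1}$ and a natural numbers object $\mathbb{N}$ by binary products $A \times B$. Maps: generated from the constants $0: \mathbb{1} \to \mathbb{N}$, $\mathrm{s}: \mathbb{N}\to\mathbb{N}$, identities, terminal maps $\Pi_A: A \to \mathbb{1}$, projections $\ell, \mathrm{r}$, by composition, induced maps $(f,g)$ and iteration $f \mapsto f^\S: A\times\mathbb{N}\to A$ of endomaps; map equality is the least congruence containing the category axioms, uniqueness of maps into $\mathbb{1}$, $\ell\circ(f,g)=f$, $\mathrm{r}\circ(f,g)=g$, $(\ell h,\mathrm{r} h)=h$, the iteration equations $f^\S(a,0)=a$, $f^\S(a,\mathrm{s}n)=f(f^\S(a,n))$, and Freyd's uniqueness rule for initialised iterates ($h(a,0)=f(a)$, $h(a,\mathrm{s}n)=g(h(a,n))$ imply $h = g^\S\circ(f\times\mathbb{N})$). $f\times g := (f\ell, g\mathrm{r})$, $\Delta_A := (\mathrm{id}_A,\mathrm{id}_A)$. Arithmetic on $\mathbb{N}$ (all defined in $\mathbf{PR}$ by iteration/primitive recursion): $\mathrm{true}=1=\mathrm{s}\circ 0$, $\mathrm{false}=0$, $\mathrm{true}_A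 = 1 \circ \Pi_A$; predecessor with $\mathrm{pred}(0)=0$, $\mathrm{pred}(\mathrm{s}n)=n$; truncated subtraction $a \dot- 0 = a$, $a \dot- \mathrm{s}n = \mathrm{pred}(a\dot- n)$; multiplication; $\neg 0 = 1$, $\neg \mathrm{s}n = 0$; $\mathrm{sign} = \neg\neg$; $x \wedge y = \mathrm{sign}(x\cdot y)$; $[m\le n] = \neg(m\dot- n)$; $[m \doteq n] = [m\le n]\wedge[n\le m]$. Equality predicates $\doteq_B: B\times B\to\mathbb{N}$ on other objects: $\doteq_{\mathbb{1}} = \mathrm{true}$, and componentwise on products: $[(a,b)\doteq_{A\times B}(a',b')] = [a\doteq_A a']\wedge[b\doteq_B b']$. *)

theory Defs
  imports Main
begin

datatype obj = One | NN | Prod obj obj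

datatype mor =
    Id obj
  | Comp mor mor          \<comment> \<open>Comp g f = g \<circ> f\<close>
  | Term obj
  | Zero
  | Succ
  | L obj obj
  | R obj obj
  | Pair mor mor
  | Iter mor

inductive typed :: "mor \<Rightarrow> obj \<Rightarrow> obj \<Rightarrow> bool" where
  t_id: "typed (Id A) A A"
| t_comp: "typed f A B \<Longrightarrow> typed g B C \<Longrightarrow> typed (Comp g f) A C"
| t_term: "typed (Term A) A One"
| t_zero: "typed Zero One NN"
| t_succ: "typed Succ NN NN"
| t_l: "typed (L A B) (Prod A B) A"
| t_r: "typed (R A B) (Prod A B) B"
| t_pair: "typed f A B \<Longrightarrow> typed g A C \<Longrightarrow> typed (Pair f g) A (Prod B C)"
| t_iter: "typed f A A \<Longrightarrow> typed (Iter f) (Prod A NN) A"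

inductive eqv :: "mor \<Rightarrow> mor \<Rightarrow> obj \<Rightarrow> obj \<Rightarrow> bool" where
  e_refl: "typed f A B \<Longrightarrow> eqv f f A B"
| e_sym: "eqv f g A B \<Longrightarrow> eqv g f A B"
| e_trans: "eqv f g A B \<Longrightarrow> eqv g h A B \<Longrightarrow> eqv f h A B"
| e_comp: "eqv f f' A B \<Longrightarrow> eqv g g' B C \<Longrightarrow> eqv (Comp g f) (Comp g' f') A C"
| e_pair: "eqv f f' A B \<Longrightarrow> eqv g g' A C \<Longrightarrow> eqv (Pair f g) (Pair f' g') A (Prod B C)"
| e_iter: "eqv f f' A A \<Longrightarrow> eqv (Iter f) (Iter f') (Prod A NN) A"
| e_assoc: "typed f A B \<Longrightarrow> typed g B C \<Longrightarrow> typed h C D \<Longrightarrow>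
            eqv (Comp h (Comp g f)) (Comp (Comp h g) f) A D"
| e_idl: "typed f A B \<Longrightarrow> eqv (Comp (Id B) f) f A B"
| e_idr: "typed f A B \<Longrightarrow> eqv (Comp f (Id A)) f A B"
| e_term: "typed f A One \<Longrightarrow> eqv f (Term A) A One"
| e_projl: "typed f A B \<Longrightarrow> typed g A C \<Longrightarrow> eqv (Comp (L B C) (Pair f g)) f A B"
| e_projr: "typed f A B \<Longrightarrow> typed g A C \<Longrightarrow> eqv (Comp (R B C) (Pair f g)) g A C"
| e_surj: "typed h A (Prod B C) \<Longrightarrow>
           eqv (Pair (Comp (L B C) h) (Comp (R B C) h)) h A (Prod B C)"
| e_iter0: "typed f A A \<Longrightarrow>
            eqv (Comp (Iter f) (Pair (Id A) (Comp Zero (Term A)))) (Id A) A A"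
| e_iterS: "typed f A A \<Longrightarrow>
            eqv (Comp (Iter f) (Pair (L A NN) (Comp Succ (R A NN)))) (Comp f (Iter f)) (Prod A NN) A"
| e_freyd: "typed h (Prod A NN) B \<Longrightarrow> typed f A B \<Longrightarrow> typed g B B \<Longrightarrow>
            eqv (Comp h (Pair (Id A) (Comp Zero (Term A)))) f A B \<Longrightarrow>
            eqv (Comp h (Pair (L A NN) (Comp Succ (R A NN)))) (Comp g h) (Prod A NN) B \<Longrightarrow>
            eqv h (Comp (Iter g) (Pair (Comp f (L A NN)) (Comp (Id NN) (R A NN)))) (Prod A NN) B"

definition times :: "mor \<Rightarrow> mor \<Rightarrow> obj \<Rightarrow> obj \<Rightarrow> mor" where
  "times f g A B = Pair (Comp f (L A B)) (Comp g (R A B))"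

definition Delta :: "obj \<Rightarrow> mor" where
  "Delta A = Pair (Id A) (Id A)"

definition one :: mor where "one = Comp Succ Zero"

definition trueA :: "obj \<Rightarrow> mor" where
  "trueA A = Comp one (Term A)"

text \<open>pred n: iterate (a,b) \<mapsto> (b, s b) from (0,0) n times, take left component.\<close>
definition predm :: mor where
  "predm = Comp (L NN NN)
     (Comp (Iter (Pair (R NN NN) (Comp Succ (R NN NN))))
       (Pair (Comp (Pair Zero Zero) (Term NN)) (Id NN)))"

definition monus :: mor where "monus = Iter predm"

definition addm :: mor where "addm = Iter Succ"

text \<open>multiplication: iterate (a,acc) \<mapsto> (a, acc + a) from (a,0) n times.\<close>
definition multm :: mor where
  "multm = Comp (R NN NN)
     (Comp (Iter (Pair (L NN NN) (Comp addm (Pair (R NN NN) (L NN NN)))))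
       (Pair (Pair (L NN NN) (Comp Zero (Term (Prod NN NN)))) (R NN NN)))"

text \<open>negation: \<not>0 = 1, \<not>(s n) = 0.\<close>
definition negm :: mor where
  "negm = Comp (Iter (Comp Zero (Term NN))) (Pair (Comp one (Term NN)) (Id NN))"

definition signm :: mor where "signm = Comp negm negm"

definition andm :: mor where "andm = Comp signm multm"

definition leqm :: mor where "leqm = Comp negm monus"

definition eqNm :: mor where
  "eqNm = Comp andm (Pair leqm (Comp leqm (Pair (R NN NN) (L NN NN))))"

fun eqpred :: "obj \<Rightarrow> mor" where
  "eqpred One = trueA (Prod One One)"
| "eqpred NN = eqNm"
| "eqpred (Prod A B) =
     Comp andm
       (Pair (Comp (eqpred A) (Pair (Comp (L A B) (L (Prod A B) (Prod A B)))
                                    (Comp (L A B) (R (Prod A B) (Prod A B)))))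
             (Comp (eqpred B) (Pair (Comp (R A B) (L (Prod A B) (Prod A B)))
                                    (Comp (R A B) (R (Prod A B) (Prod A B))))))"

end

theory Submission
  imports Defs
begin

text \<open>Derivable equality is a congruence, so the well-typed map terms modulo it form a category in
  which the equations of PR hold as HOL equations, and Freyd's rule becomes uniqueness of maps
  defined by primitive recursion, i.e. induction on a natural-number variable. The theorem itself is
  proved by induction on \<open>B\<close>. For \<open>1\<close> it is trivial, and for products it follows componentwise,
  since the two conjuncts are 0/1-valued. For \<open>N\<close>, \<open>[m \<doteq> n] = 1\<close> forces
  \<open>m \<ominus> n = n \<ominus> m = 0\<close>, and \<open>n \<oplus> (m \<ominus> n) = m \<oplus> (n \<ominus> m)\<close> gives \<open>m = n\<close>. That identity rests on
  \<open>s n \<ominus> m = (n \<ominus> m) \<oplus> \<not>(m \<ominus> n)\<close>, a statement in two variables out of reach of induction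
  on one; it follows from a uniqueness principle for maps \<open>N \<times> N \<rightarrow> B\<close> that agree on both axes
  and are invariant under \<open>(x, y) \<mapsto> (s x, s y)\<close>, proved by moving every point to an axis
  along the diagonal.\<close>

section \<open>Maps of PR up to derivable equality\<close>

fun mdom :: "mor \<Rightarrow> obj" and mcod :: "mor \<Rightarrow> obj" where
  "mdom (Id A) = A" | "mcod (Id A) = A"
| "mdom (Comp g f) = mdom f" | "mcod (Comp g f) = mcod g"
| "mdom (Term A) = A" | "mcod (Term A) = One"
| "mdom Zero = One" | "mcod Zero = NN"
| "mdom Succ = NN" | "mcod Succ = NN"
| "mdom (L A B) = Prod A B" | "mcod (L A B) = A"
| "mdom (R A B) = Prod A B" | "mcod (R A B) = B"
| "mdom (Pair f g) = mdom f" | "mcod (Pair f g) = Prod (mcod f) (mcod g)"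
| "mdom (Iter f) = Prod (mdom f) NN" | "mcod (Iter f) = mdom f"

fun well_typed :: "mor \<Rightarrow> bool" where
  "well_typed (Comp g f) \<longleftrightarrow> well_typed f \<and> well_typed g \<and> mcod f = mdom g"
| "well_typed (Pair f g) \<longleftrightarrow> well_typed f \<and> well_typed g \<and> mdom f = mdom g"
| "well_typed (Iter f) \<longleftrightarrow> well_typed f \<and> mcod f = mdom f"
| "well_typed _ \<longleftrightarrow> True"

lemma typed_iff_well_typed: "typed f A B \<longleftrightarrow> well_typed f \<and> mdom f = A \<and> mcod f = B"
proof
  show "typed f A B \<Longrightarrow> well_typed f \<and> mdom f = A \<and> mcod f = B"
    by (induction rule: typed.induct) auto
  show "well_typed f \<and> mdom f = A \<and> mcod f = B \<Longrightarrow> typed f A B"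
    by (induction f arbitrary: A B) (auto intro: typed.intros)
qed

lemma eqv_imp_typed: "eqv f g A B \<Longrightarrow> typed f A B \<and> typed g A B"
  by (induction rule: eqv.induct) (auto intro: typed.intros)

text \<open>Ill-typed terms with the same domain and codomain are identified with each other: they are
  junk, and only serve to make the relation an equivalence on all of \<open>mor\<close>.\<close>

definition same_map :: "mor \<Rightarrow> mor \<Rightarrow> bool" where
  "same_map f g \<longleftrightarrow> mdom f = mdom g \<and> mcod f = mcod g \<and> well_typed f = well_typed g \<and>
     (well_typed f \<longrightarrow> eqv f g (mdom f) (mcod f))"

lemma equivp_same_map: "equivp same_map"
proof (rule equivpI)
  show "reflp same_map"
    unfolding reflp_def same_map_def by (auto intro: e_refl simp: typed_iff_well_typed)
  show "symp same_map" unfolding symp_def same_map_def by (auto intro: e_sym)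
  show "transp same_map" unfolding transp_def same_map_def by (auto intro: e_trans)
qed

lemma same_mapI: "well_typed f \<Longrightarrow> eqv f g (mdom f) (mcod f) \<Longrightarrow> same_map f g"
  unfolding same_map_def using eqv_imp_typed typed_iff_well_typed by metis

quotient_type arr = mor / same_map
  by (rule equivp_same_map)

lift_definition idA :: "obj \<Rightarrow> arr" is Id .
lift_definition compA :: "arr \<Rightarrow> arr \<Rightarrow> arr" (infixr "\<cdot>" 80) is Comp
  unfolding same_map_def by (auto intro: e_comp)
lift_definition trmA :: "obj \<Rightarrow> arr" is Term .
lift_definition zeroA :: arr is Zero .
lift_definition succA :: arr is Succ .
lift_definition fstA :: "obj \<Rightarrow> obj \<Rightarrow> arr" is L .
lift_definition sndA :: "obj \<Rightarrow> obj \<Rightarrow> arr" is R .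
lift_definition pairA :: "arr \<Rightarrow> arr \<Rightarrow> arr" ("\<langle>_,/ _\<rangle>") is Pair
  unfolding same_map_def by (auto intro: e_pair)
lift_definition iterA :: "arr \<Rightarrow> arr" is Iter
  unfolding same_map_def by (auto intro: e_iter)
lift_definition domA :: "arr \<Rightarrow> obj" is mdom unfolding same_map_def by auto
lift_definition codA :: "arr \<Rightarrow> obj" is mcod unfolding same_map_def by auto
lift_definition wfA :: "arr \<Rightarrow> bool" is well_typed unfolding same_map_def by auto

abbreviation hom :: "arr \<Rightarrow> obj \<Rightarrow> obj \<Rightarrow> bool" where
  "hom f A B \<equiv> wfA f \<and> domA f = A \<and> codA f = B"

lemma abs_arr_eq_iff: "abs_arr f = abs_arr g \<longleftrightarrow> same_map f g"
  using Quotient3_rel[OF Quotient3_arr] equivp_reflp[OF equivp_same_map] by blast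

lemma eqv_iff_abs_arr_eq:
  assumes "typed f A B"
  shows "eqv f g A B \<longleftrightarrow> abs_arr f = abs_arr g"
proof
  assume "eqv f g A B"
  then show "abs_arr f = abs_arr g"
    using eqv_imp_typed[of f g A B] by (simp add: abs_arr_eq_iff same_map_def typed_iff_well_typed)
next
  assume "abs_arr f = abs_arr g"
  then show "eqv f g A B"
    using assms unfolding abs_arr_eq_iff same_map_def typed_iff_well_typed by metis
qed

lemma hom_abs_arr: "typed f A B \<Longrightarrow> hom (abs_arr f) A B"
  by (simp add: typed_iff_well_typed wfA.abs_eq domA.abs_eq codA.abs_eq)

lemma abs_arr_simps:
  "abs_arr (Id A) = idA A" "abs_arr (Comp g f) = abs_arr g \<cdot> abs_arr f"
  "abs_arr (Term A) = trmA A" "abs_arr Zero = zeroA" "abs_arr Succ = succA"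
  "abs_arr (L A B) = fstA A B" "abs_arr (R A B) = sndA A B"
  "abs_arr (Pair f g) = \<langle>abs_arr f, abs_arr g\<rangle>" "abs_arr (Iter f) = iterA (abs_arr f)"
  by (simp_all add: idA.abs_eq compA.abs_eq trmA.abs_eq zeroA.abs_eq succA.abs_eq fstA.abs_eq
      sndA.abs_eq pairA.abs_eq iterA.abs_eq)

lemma typing_simps[simp]:
  "domA (idA A) = A" "codA (idA A) = A" "wfA (idA A)"
  "domA (g \<cdot> f) = domA f" "codA (g \<cdot> f) = codA g" "wfA (g \<cdot> f) \<longleftrightarrow> wfA f \<and> wfA g \<and> codA f = domA g"
  "domA (trmA A) = A" "codA (trmA A) = One" "wfA (trmA A)"
  "domA zeroA = One" "codA zeroA = NN" "wfA zeroA"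
  "domA succA = NN" "codA succA = NN" "wfA succA"
  "domA (fstA A B) = Prod A B" "codA (fstA A B) = A" "wfA (fstA A B)"
  "domA (sndA A B) = Prod A B" "codA (sndA A B) = B" "wfA (sndA A B)"
  "domA \<langle>f, g\<rangle> = domA f" "codA \<langle>f, g\<rangle> = Prod (codA f) (codA g)"
  "wfA \<langle>f, g\<rangle> \<longleftrightarrow> wfA f \<and> wfA g \<and> domA f = domA g"
  "domA (iterA f) = Prod (domA f) NN" "codA (iterA f) = domA f"
  "wfA (iterA f) \<longleftrightarrow> wfA f \<and> codA f = domA f"
  by (transfer, simp)+

lemma comp_assoc:
  "wfA f \<Longrightarrow> wfA g \<Longrightarrow> wfA h \<Longrightarrow> codA f = domA g \<Longrightarrow> codA g = domA h \<Longrightarrow> (h \<cdot> g) \<cdot> f = h \<cdot> g \<cdot> f"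
  by transfer (auto intro!: same_mapI e_sym[OF e_assoc] simp: typed_iff_well_typed)

lemma id_comp: "wfA f \<Longrightarrow> codA f = B \<Longrightarrow> idA B \<cdot> f = f"
  by transfer (auto intro!: same_mapI e_idl simp: typed_iff_well_typed)

lemma comp_id: "wfA f \<Longrightarrow> domA f = A \<Longrightarrow> f \<cdot> idA A = f"
  by transfer (auto intro!: same_mapI e_idr simp: typed_iff_well_typed)

lemma terminal_unique: "wfA f \<Longrightarrow> codA f = One \<Longrightarrow> f = trmA (domA f)"
  by transfer (auto intro!: same_mapI e_term simp: typed_iff_well_typed)

lemma trm_comp: "wfA f \<Longrightarrow> codA f = B \<Longrightarrow> trmA B \<cdot> f = trmA (domA f)"
  using terminal_unique[of "trmA B \<cdot> f"] by simp

lemma fst_pair: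
  "wfA f \<Longrightarrow> wfA g \<Longrightarrow> domA f = domA g \<Longrightarrow> codA f = A \<Longrightarrow> codA g = B \<Longrightarrow> fstA A B \<cdot> \<langle>f, g\<rangle> = f"
  by transfer (auto intro!: same_mapI e_projl simp: typed_iff_well_typed)

lemma snd_pair:
  "wfA f \<Longrightarrow> wfA g \<Longrightarrow> domA f = domA g \<Longrightarrow> codA f = A \<Longrightarrow> codA g = B \<Longrightarrow> sndA A B \<cdot> \<langle>f, g\<rangle> = g"
  by transfer (auto intro!: same_mapI e_projr simp: typed_iff_well_typed)

lemma pair_fst_snd: "wfA h \<Longrightarrow> codA h = Prod A B \<Longrightarrow> \<langle>fstA A B \<cdot> h, sndA A B \<cdot> h\<rangle> = h"
  by transfer (auto intro!: same_mapI e_surj simp: typed_iff_well_typed)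

lemma pair_fst_snd_id: "\<langle>fstA A B, sndA A B\<rangle> = idA (Prod A B)"
  using pair_fst_snd[of "idA (Prod A B)" A B] comp_id[of "fstA A B"] comp_id[of "sndA A B"] by simp

lemma pair_comp:
  assumes "wfA f" "wfA g" "wfA h" "domA f = domA g" "codA h = domA f"
  shows "\<langle>f, g\<rangle> \<cdot> h = \<langle>f \<cdot> h, g \<cdot> h\<rangle>"
proof -
  let ?l = "fstA (codA f) (codA g)" and ?r = "sndA (codA f) (codA g)"
  have "\<langle>f \<cdot> h, g \<cdot> h\<rangle> = \<langle>?l \<cdot> \<langle>f, g\<rangle> \<cdot> h, ?r \<cdot> \<langle>f, g\<rangle> \<cdot> h\<rangle>"
    using assms by (simp add: comp_assoc[symmetric] fst_pair snd_pair)
  also have "\<dots> = \<langle>f, g\<rangle> \<cdot> h"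
    using assms by (intro pair_fst_snd) auto
  finally show ?thesis by simp
qed

lemmas cat_simps = comp_assoc id_comp comp_id trm_comp fst_pair snd_pair pair_fst_snd
  pair_fst_snd_id pair_comp

abbreviation zero_at :: "obj \<Rightarrow> arr" where "zero_at G \<equiv> zeroA \<cdot> trmA G"
abbreviation suc :: "arr \<Rightarrow> arr" where "suc x \<equiv> succA \<cdot> x"
abbreviation one_at :: "obj \<Rightarrow> arr" where "one_at G \<equiv> suc (zero_at G)"

abbreviation px :: arr where "px \<equiv> fstA NN NN"
abbreviation py :: arr where "py \<equiv> sndA NN NN"

lemma iter_zero:
  assumes "wfA f" "codA f = domA f" "hom a G (domA f)"
  shows "iterA f \<cdot> \<langle>a, zero_at G\<rangle> = a"
proof -
  have "iterA f \<cdot> \<langle>idA (domA f), zero_at (domA f)\<rangle> = idA (domA f)"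
    using assms by transfer (auto intro!: same_mapI e_iter0 simp: typed_iff_well_typed)
  moreover have "iterA f \<cdot> \<langle>a, zero_at G\<rangle> = (iterA f \<cdot> \<langle>idA (domA f), zero_at (domA f)\<rangle>) \<cdot> a"
    using assms by (simp add: cat_simps)
  ultimately show ?thesis using assms by (simp add: cat_simps)
qed

lemma iter_succ:
  assumes "wfA f" "codA f = domA f" "hom a G (domA f)" "hom n G NN"
  shows "iterA f \<cdot> \<langle>a, suc n\<rangle> = f \<cdot> iterA f \<cdot> \<langle>a, n\<rangle>"
proof -
  let ?A = "domA f"
  have "iterA f \<cdot> \<langle>fstA ?A NN, suc (sndA ?A NN)\<rangle> = f \<cdot> iterA f"
    using assms by transfer (auto intro!: same_mapI e_iterS simp: typed_iff_well_typed)
  moreover have "iterA f \<cdot> \<langle>a, suc n\<rangle> = (iterA f \<cdot> \<langle>fstA ?A NN, suc (sndA ?A NN)\<rangle>) \<cdot> \<langle>a, n\<rangle>"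
    using assms by (simp add: cat_simps)
  ultimately show ?thesis using assms by (simp add: cat_simps)
qed

lemma freyd_unique:
  assumes "hom h (Prod A NN) B" "hom f A B" "hom g B B"
    and "h \<cdot> \<langle>idA A, zero_at A\<rangle> = f"
    and "h \<cdot> \<langle>fstA A NN, suc (sndA A NN)\<rangle> = g \<cdot> h"
  shows "h = iterA g \<cdot> \<langle>f \<cdot> fstA A NN, idA NN \<cdot> sndA A NN\<rangle>"
  using assms by transfer (auto simp: same_map_def typed_iff_well_typed intro!: e_freyd)

section \<open>Induction on a natural-number variable\<close>

text \<open>\<open>\<langle>id, H\<rangle>\<close> is an initialised iterate of \<open>(\<gamma>, n, b) \<mapsto> (\<gamma>, s n, St(\<gamma>, n, b))\<close>, so Freyd's
  rule determines it; \<open>H\<close> is its second component.\<close>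

lemma prim_rec_unique:
  assumes H: "hom H (Prod G NN) B" and K: "hom K (Prod G NN) B"
    and St: "hom St (Prod (Prod G NN) B) B"
    and base: "H \<cdot> \<langle>idA G, zero_at G\<rangle> = K \<cdot> \<langle>idA G, zero_at G\<rangle>"
    and step_H: "H \<cdot> \<langle>fstA G NN, suc (sndA G NN)\<rangle> = St \<cdot> \<langle>idA (Prod G NN), H\<rangle>"
    and step_K: "K \<cdot> \<langle>fstA G NN, suc (sndA G NN)\<rangle> = St \<cdot> \<langle>idA (Prod G NN), K\<rangle>"
  shows "H = K"
proof -
  define g where "g = \<langle>\<langle>fstA G NN \<cdot> fstA (Prod G NN) B, suc (sndA G NN \<cdot> fstA (Prod G NN) B)\<rangle>, St\<rangle>"
  define f where "f = \<langle>idA (Prod G NN), H\<rangle> \<cdot> \<langle>idA G, zero_at G\<rangle>"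
  let ?iterate = "iterA g \<cdot> \<langle>f \<cdot> fstA G NN, idA NN \<cdot> sndA G NN\<rangle>"
  have "\<langle>idA (Prod G NN), H\<rangle> = ?iterate"
    by (rule freyd_unique) (use H St step_H in \<open>simp_all add: g_def f_def cat_simps\<close>)
  moreover have "\<langle>idA (Prod G NN), K\<rangle> = ?iterate"
    by (rule freyd_unique) (use H K St base step_K in \<open>simp_all add: g_def f_def cat_simps\<close>)
  ultimately have "\<langle>idA (Prod G NN), H\<rangle> = \<langle>idA (Prod G NN), K\<rangle>"
    by simp
  from this[THEN arg_cong, of "\<lambda>h. sndA (Prod G NN) B \<cdot> h"] show ?thesis
    using H K by (simp add: cat_simps)
qed

lemma nat_cases_eq:
  assumes H: "hom H (Prod G NN) B" and K: "hom K (Prod G NN) B"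
    and base: "H \<cdot> \<langle>idA G, zero_at G\<rangle> = K \<cdot> \<langle>idA G, zero_at G\<rangle>"
    and step: "H \<cdot> \<langle>fstA G NN, suc (sndA G NN)\<rangle> = K \<cdot> \<langle>fstA G NN, suc (sndA G NN)\<rangle>"
  shows "H = K"
proof (rule prim_rec_unique[OF H K _ base])
  let ?St = "K \<cdot> \<langle>fstA G NN \<cdot> fstA (Prod G NN) B, suc (sndA G NN \<cdot> fstA (Prod G NN) B)\<rangle>"
  show "hom ?St (Prod (Prod G NN) B) B" using K by simp
  show "H \<cdot> \<langle>fstA G NN, suc (sndA G NN)\<rangle> = ?St \<cdot> \<langle>idA (Prod G NN), H\<rangle>"
    using H K step by (simp add: cat_simps)
  show "K \<cdot> \<langle>fstA G NN, suc (sndA G NN)\<rangle> = ?St \<cdot> \<langle>idA (Prod G NN), K\<rangle>"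
    using H K by (simp add: cat_simps)
qed

lemma nat_cases_eq_fst:
  assumes H: "hom H (Prod NN NN) B" and K: "hom K (Prod NN NN) B"
    and base: "H \<cdot> \<langle>zero_at NN, idA NN\<rangle> = K \<cdot> \<langle>zero_at NN, idA NN\<rangle>"
    and step: "H \<cdot> \<langle>suc px, py\<rangle> = K \<cdot> \<langle>suc px, py\<rangle>"
  shows "H = K"
proof -
  let ?swap = "\<langle>py, px\<rangle>"
  have "H \<cdot> ?swap = K \<cdot> ?swap"
    by (rule nat_cases_eq[where G = NN and B = B])
      (use H K base step[THEN arg_cong, of "\<lambda>h. h \<cdot> ?swap"] in \<open>simp_all add: cat_simps\<close>)
  from this[THEN arg_cong, of "\<lambda>h. h \<cdot> ?swap"] show ?thesis
    using H K by (simp add: cat_simps)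
qed

section \<open>Arithmetic\<close>

definition pred_step :: arr where
  "pred_step = \<langle>py, suc py\<rangle>"

definition predA :: arr where
  "predA = px \<cdot> iterA pred_step \<cdot> \<langle>\<langle>zeroA, zeroA\<rangle> \<cdot> trmA NN, idA NN\<rangle>"

definition subA :: arr where "subA = iterA predA"

definition addA :: arr where "addA = iterA succA"

definition mul_step :: arr where
  "mul_step = \<langle>px, addA \<cdot> \<langle>py, px\<rangle>\<rangle>"

definition mulA :: arr where
  "mulA = py \<cdot> iterA mul_step \<cdot> \<langle>\<langle>px, zero_at (Prod NN NN)\<rangle>, py\<rangle>"

definition negA :: arr where
  "negA = iterA (zero_at NN) \<cdot> \<langle>one_at NN, idA NN\<rangle>"

lemma arith_typing[simp]:
  "hom pred_step (Prod NN NN) (Prod NN NN)" "hom predA NN NN" "hom subA (Prod NN NN) NN"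
  "hom addA (Prod NN NN) NN" "hom mul_step (Prod NN NN) (Prod NN NN)" "hom mulA (Prod NN NN) NN"
  "hom negA NN NN"
  by (simp_all add: pred_step_def predA_def subA_def addA_def mul_step_def mulA_def negA_def)

lemma abs_arr_arith:
  "abs_arr predm = predA" "abs_arr monus = subA" "abs_arr addm = addA" "abs_arr multm = mulA"
  "abs_arr negm = negA"
  by (simp_all add: abs_arr_simps predm_def predA_def pred_step_def monus_def subA_def addm_def
      addA_def multm_def mulA_def mul_step_def negm_def negA_def one_def cat_simps)

abbreviation pre :: "arr \<Rightarrow> arr" where "pre x \<equiv> predA \<cdot> x"
abbreviation add :: "arr \<Rightarrow> arr \<Rightarrow> arr" (infixl "\<oplus>" 65) where "x \<oplus> y \<equiv> addA \<cdot> \<langle>x, y\<rangle>"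
abbreviation sub :: "arr \<Rightarrow> arr \<Rightarrow> arr" (infixl "\<ominus>" 65) where "x \<ominus> y \<equiv> subA \<cdot> \<langle>x, y\<rangle>"
abbreviation mul :: "arr \<Rightarrow> arr \<Rightarrow> arr" (infixl "\<otimes>" 70) where "x \<otimes> y \<equiv> mulA \<cdot> \<langle>x, y\<rangle>"
abbreviation neg :: "arr \<Rightarrow> arr" where "neg x \<equiv> negA \<cdot> x"
abbreviation sg :: "arr \<Rightarrow> arr" where "sg x \<equiv> neg (neg x)"

lemma add_zero: "hom x G NN \<Longrightarrow> x \<oplus> zero_at G = x"
  unfolding addA_def by (rule iter_zero) auto

lemma add_succ: "hom x G NN \<Longrightarrow> hom y G NN \<Longrightarrow> x \<oplus> suc y = suc (x \<oplus> y)"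
  unfolding addA_def by (rule iter_succ) auto

lemma sub_zero: "hom x G NN \<Longrightarrow> x \<ominus> zero_at G = x"
  unfolding subA_def by (rule iter_zero) auto

lemma sub_succ: "hom x G NN \<Longrightarrow> hom y G NN \<Longrightarrow> x \<ominus> suc y = pre (x \<ominus> y)"
  unfolding subA_def by (rule iter_succ) auto

lemma pred_zero: "pre (zero_at G) = zero_at G"
  unfolding predA_def by (simp add: cat_simps iter_zero)

lemma pred_step_iterate_snd:
  assumes n: "hom n G NN"
  shows "py \<cdot> iterA pred_step \<cdot> \<langle>\<langle>zero_at G, zero_at G\<rangle>, n\<rangle> = n"
proof -
  let ?z = "zero_at (Prod G NN)"
  have "py \<cdot> iterA pred_step \<cdot> \<langle>\<langle>?z, ?z\<rangle>, sndA G NN\<rangle> = sndA G NN"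
    by (rule prim_rec_unique[where G = G and B = NN and St = "suc (sndA (Prod G NN) NN)"])
      (simp_all add: cat_simps iter_zero iter_succ pred_step_def)
  from this[THEN arg_cong, of "\<lambda>h. h \<cdot> \<langle>idA G, n\<rangle>"] show ?thesis
    using n by (simp add: cat_simps)
qed

lemma pred_step_comp:
  "hom X G (Prod NN NN) \<Longrightarrow> pred_step \<cdot> X = \<langle>py \<cdot> X, suc (py \<cdot> X)\<rangle>"
  unfolding pred_step_def by (simp add: cat_simps)

lemma pred_succ: "hom n G NN \<Longrightarrow> pre (suc n) = n"
  unfolding predA_def by (simp add: cat_simps iter_succ pred_step_iterate_snd pred_step_comp)

lemma mul_step_comp:
  "hom X G (Prod NN NN) \<Longrightarrow> mul_step \<cdot> X = \<langle>px \<cdot> X, py \<cdot> X \<oplus> px \<cdot> X\<rangle>"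
  unfolding mul_step_def by (simp add: cat_simps)

lemma mul_step_iterate_fst:
  assumes x: "hom x G NN" and n: "hom n G NN"
  shows "px \<cdot> iterA mul_step \<cdot> \<langle>\<langle>x, zero_at G\<rangle>, n\<rangle> = x"
proof -
  let ?x = "x \<cdot> fstA G NN"
  have "px \<cdot> iterA mul_step \<cdot> \<langle>\<langle>?x, zero_at (Prod G NN)\<rangle>, sndA G NN\<rangle> = ?x"
    by (rule prim_rec_unique[where G = G and B = NN and St = "sndA (Prod G NN) NN"])
      (use x in \<open>simp_all add: cat_simps iter_zero iter_succ mul_step_comp\<close>)
  from this[THEN arg_cong, of "\<lambda>h. h \<cdot> \<langle>idA G, n\<rangle>"] show ?thesis
    using x n by (simp add: cat_simps)
qed

lemma mul_zero: "hom x G NN \<Longrightarrow> x \<otimes> zero_at G = zero_at G"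
  unfolding mulA_def by (simp add: cat_simps iter_zero)

lemma mul_succ: "hom x G NN \<Longrightarrow> hom y G NN \<Longrightarrow> x \<otimes> suc y = x \<otimes> y \<oplus> x"
  unfolding mulA_def
  by (simp add: cat_simps iter_succ mul_step_comp mul_step_iterate_fst)

lemma neg_zero: "neg (zero_at G) = one_at G"
  unfolding negA_def by (simp add: cat_simps iter_zero)

lemma neg_succ: "hom x G NN \<Longrightarrow> neg (suc x) = zero_at G"
  unfolding negA_def by (simp add: cat_simps iter_succ)

lemmas arith_simps = add_zero add_succ sub_zero sub_succ pred_zero pred_succ mul_zero mul_succ
  neg_zero neg_succ

text \<open>Identities in a variable \<open>n : N\<close> are proved for the generic \<open>n = \<pi>\<^sub>2 : G \<times> N \<rightarrow> N\<close>
  (other variables are weakened along \<open>\<pi>\<^sub>1\<close>) and then instantiated by precomposition with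
  \<open>\<langle>id, n\<rangle>\<close>.\<close>

lemma zero_add:
  assumes "hom y G NN"
  shows "zero_at G \<oplus> y = y"
proof -
  let ?y = "sndA G NN"
  have "zero_at (Prod G NN) \<oplus> ?y = ?y"
    by (rule prim_rec_unique[where G = G and B = NN and St = "suc (sndA (Prod G NN) NN)"])
      (simp_all add: cat_simps arith_simps)
  from this[THEN arg_cong, of "\<lambda>h. h \<cdot> \<langle>idA G, y\<rangle>"] show ?thesis
    using assms by (simp add: cat_simps)
qed

lemma succ_add:
  assumes "hom x G NN" "hom y G NN"
  shows "suc x \<oplus> y = suc (x \<oplus> y)"
proof -
  let ?x = "x \<cdot> fstA G NN" and ?y = "sndA G NN"
  have "suc ?x \<oplus> ?y = suc (?x \<oplus> ?y)"
    by (rule prim_rec_unique[where G = G and B = NN and St = "suc (sndA (Prod G NN) NN)"])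
      (use assms in \<open>simp_all add: cat_simps arith_simps\<close>)
  from this[THEN arg_cong, of "\<lambda>h. h \<cdot> \<langle>idA G, y\<rangle>"] show ?thesis
    using assms by (simp add: cat_simps)
qed

lemma add_assoc:
  assumes "hom x G NN" "hom y G NN" "hom z G NN"
  shows "x \<oplus> y \<oplus> z = x \<oplus> (y \<oplus> z)"
proof -
  let ?x = "x \<cdot> fstA G NN" and ?y = "y \<cdot> fstA G NN" and ?z = "sndA G NN"
  have "?x \<oplus> ?y \<oplus> ?z = ?x \<oplus> (?y \<oplus> ?z)"
    by (rule prim_rec_unique[where G = G and B = NN and St = "suc (sndA (Prod G NN) NN)"])
      (use assms in \<open>simp_all add: cat_simps arith_simps\<close>)
  from this[THEN arg_cong, of "\<lambda>h. h \<cdot> \<langle>idA G, z\<rangle>"] show ?thesis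
    using assms by (simp add: cat_simps)
qed

lemma zero_sub:
  assumes "hom y G NN"
  shows "zero_at G \<ominus> y = zero_at G"
proof -
  let ?y = "sndA G NN"
  have "zero_at (Prod G NN) \<ominus> ?y = zero_at (Prod G NN)"
    by (rule prim_rec_unique[where G = G and B = NN and St = "pre (sndA (Prod G NN) NN)"])
      (simp_all add: cat_simps arith_simps)
  from this[THEN arg_cong, of "\<lambda>h. h \<cdot> \<langle>idA G, y\<rangle>"] show ?thesis
    using assms by (simp add: cat_simps)
qed

lemma succ_sub_succ:
  assumes "hom x G NN" "hom y G NN"
  shows "suc x \<ominus> suc y = x \<ominus> y"
proof -
  let ?x = "x \<cdot> fstA G NN" and ?y = "sndA G NN"
  have "suc ?x \<ominus> suc ?y = ?x \<ominus> ?y"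
    by (rule prim_rec_unique[where G = G and B = NN and St = "pre (sndA (Prod G NN) NN)"])
      (use assms in \<open>simp_all add: cat_simps arith_simps\<close>)
  from this[THEN arg_cong, of "\<lambda>h. h \<cdot> \<langle>idA G, y\<rangle>"] show ?thesis
    using assms by (simp add: cat_simps)
qed

lemma sub_self:
  assumes "hom y G NN"
  shows "y \<ominus> y = zero_at G"
proof -
  let ?y = "sndA G NN"
  have "?y \<ominus> ?y = zero_at (Prod G NN)"
    by (rule prim_rec_unique[where G = G and B = NN and St = "sndA (Prod G NN) NN"])
      (simp_all add: cat_simps arith_simps succ_sub_succ del: sub_succ)
  from this[THEN arg_cong, of "\<lambda>h. h \<cdot> \<langle>idA G, y\<rangle>"] show ?thesis
    using assms by (simp add: cat_simps)
qed

lemma pred_neg: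
  assumes "hom y G NN"
  shows "pre (neg y) = zero_at G"
proof -
  let ?y = "sndA G NN"
  have "pre (neg ?y) = zero_at (Prod G NN)"
    by (rule nat_cases_eq[where G = G and B = NN])
      (simp_all add: cat_simps arith_simps)
  from this[THEN arg_cong, of "\<lambda>h. h \<cdot> \<langle>idA G, y\<rangle>"] show ?thesis
    using assms by (simp add: cat_simps)
qed

lemma add_neg_eq_suc_pred:
  assumes "hom y G NN"
  shows "y \<oplus> neg y = suc (pre y)"
proof -
  let ?y = "sndA G NN"
  have "?y \<oplus> neg ?y = suc (pre ?y)"
    by (rule nat_cases_eq[where G = G and B = NN])
      (simp_all add: cat_simps arith_simps zero_add)
  from this[THEN arg_cong, of "\<lambda>h. h \<cdot> \<langle>idA G, y\<rangle>"] show ?thesis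
    using assms by (simp add: cat_simps)
qed

lemma pred_sub:
  assumes "hom a G NN" "hom k G NN"
  shows "pre a \<ominus> k = pre (a \<ominus> k)"
proof -
  let ?a = "a \<cdot> fstA G NN" and ?k = "sndA G NN"
  have "pre ?a \<ominus> ?k = pre (?a \<ominus> ?k)"
    by (rule prim_rec_unique[where G = G and B = NN and St = "pre (sndA (Prod G NN) NN)"])
      (use assms in \<open>simp_all add: cat_simps arith_simps\<close>)
  from this[THEN arg_cong, of "\<lambda>h. h \<cdot> \<langle>idA G, k\<rangle>"] show ?thesis
    using assms by (simp add: cat_simps)
qed

lemma one_sub:
  assumes "hom y G NN"
  shows "one_at G \<ominus> y = neg y"
proof -
  let ?y = "sndA G NN"
  have "one_at (Prod G NN) \<ominus> ?y = neg ?y"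
    by (rule prim_rec_unique[where G = G and B = NN and St = "pre (sndA (Prod G NN) NN)"])
      (simp_all add: cat_simps arith_simps pred_neg)
  from this[THEN arg_cong, of "\<lambda>h. h \<cdot> \<langle>idA G, y\<rangle>"] show ?thesis
    using assms by (simp add: cat_simps)
qed

lemma zero_mul:
  assumes "hom y G NN"
  shows "zero_at G \<otimes> y = zero_at G"
proof -
  let ?y = "sndA G NN"
  have "zero_at (Prod G NN) \<otimes> ?y = zero_at (Prod G NN)"
    by (rule prim_rec_unique[where G = G and B = NN and St = "sndA (Prod G NN) NN"])
      (simp_all add: cat_simps arith_simps)
  from this[THEN arg_cong, of "\<lambda>h. h \<cdot> \<langle>idA G, y\<rangle>"] show ?thesis
    using assms by (simp add: cat_simps)
qed

lemma one_mul:
  assumes "hom y G NN"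
  shows "one_at G \<otimes> y = y"
proof -
  let ?y = "sndA G NN"
  have "one_at (Prod G NN) \<otimes> ?y = ?y"
    by (rule prim_rec_unique[where G = G and B = NN and St = "suc (sndA (Prod G NN) NN)"])
      (simp_all add: cat_simps arith_simps)
  from this[THEN arg_cong, of "\<lambda>h. h \<cdot> \<langle>idA G, y\<rangle>"] show ?thesis
    using assms by (simp add: cat_simps)
qed

lemma mul_one: "hom x G NN \<Longrightarrow> x \<otimes> one_at G = x"
  by (simp add: arith_simps zero_add)

lemma neg_sg:
  assumes "hom w G NN"
  shows "neg (sg w) = neg w"
proof -
  let ?w = "sndA G NN"
  have "neg (sg ?w) = neg ?w"
    by (rule nat_cases_eq[where G = G and B = NN])
      (simp_all add: cat_simps arith_simps)
  from this[THEN arg_cong, of "\<lambda>h. h \<cdot> \<langle>idA G, w\<rangle>"] show ?thesis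
    using assms by (simp add: cat_simps)
qed

lemma mul_sg:
  assumes "hom w G NN"
  shows "w \<otimes> sg w = w"
proof -
  let ?w = "sndA G NN"
  have "?w \<otimes> sg ?w = ?w"
    by (rule nat_cases_eq[where G = G and B = NN])
      (simp_all add: cat_simps arith_simps zero_mul mul_one zero_add)
  from this[THEN arg_cong, of "\<lambda>h. h \<cdot> \<langle>idA G, w\<rangle>"] show ?thesis
    using assms by (simp add: cat_simps)
qed

lemma neg_mul_sg:
  assumes "hom w G NN" "hom q G NN"
  shows "neg w \<otimes> sg (neg w \<otimes> q) = sg (neg w \<otimes> q)"
proof -
  let ?w = "sndA G NN" and ?q = "q \<cdot> fstA G NN"
  have "neg ?w \<otimes> sg (neg ?w \<otimes> ?q) = sg (neg ?w \<otimes> ?q)"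
    by (rule nat_cases_eq[where G = G and B = NN])
      (use assms in \<open>simp_all add: cat_simps arith_simps one_mul zero_mul zero_add\<close>)
  from this[THEN arg_cong, of "\<lambda>h. h \<cdot> \<langle>idA G, w\<rangle>"] show ?thesis
    using assms by (simp add: cat_simps)
qed

lemma pred_mul_sg:
  assumes "hom a G NN" "hom b G NN"
  shows "pre a \<otimes> sg b = pre (a \<otimes> sg b)"
proof -
  let ?a = "a \<cdot> fstA G NN" and ?b = "sndA G NN"
  have "pre ?a \<otimes> sg ?b = pre (?a \<otimes> sg ?b)"
    by (rule nat_cases_eq[where G = G and B = NN])
      (use assms in \<open>simp_all add: cat_simps arith_simps mul_one zero_add\<close>)
  from this[THEN arg_cong, of "\<lambda>h. h \<cdot> \<langle>idA G, b\<rangle>"] show ?thesis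
    using assms by (simp add: cat_simps)
qed

section \<open>Maps on \<open>N \<times> N\<close> invariant under the diagonal shift\<close>

definition diag_invariant :: "arr \<Rightarrow> bool" where
  "diag_invariant F \<longleftrightarrow> F \<cdot> \<langle>suc px, suc py\<rangle> = F"

text \<open>Decrements both coordinates when both are positive, and fixes the axes.\<close>

definition diag_step :: arr where
  "diag_step = \<langle>px \<ominus> sg py, py \<ominus> sg px\<rangle>"

lemma hom_diag_step[simp]: "hom diag_step (Prod NN NN) (Prod NN NN)"
  by (simp add: diag_step_def)

lemma diag_step_fst_guard:
  assumes "hom a G NN" "hom b G NN"
  shows "(a \<ominus> sg b) \<otimes> sg (b \<ominus> sg a) = pre (a \<otimes> sg b) \<otimes> sg (b \<ominus> sg a)"
proof -
  let ?a = "a \<cdot> fstA G NN" and ?b = "sndA G NN"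
  have "(?a \<ominus> sg ?b) \<otimes> sg (?b \<ominus> sg ?a) = pre (?a \<otimes> sg ?b) \<otimes> sg (?b \<ominus> sg ?a)"
    by (rule nat_cases_eq[where G = G and B = NN])
      (use assms in \<open>simp_all add: cat_simps arith_simps zero_sub mul_one zero_add\<close>)
  from this[THEN arg_cong, of "\<lambda>h. h \<cdot> \<langle>idA G, b\<rangle>"] show ?thesis
    using assms by (simp add: cat_simps)
qed

lemma diag_step_fst_sub_guard:
  assumes "hom a G NN" "hom k G NN" "hom b G NN"
  shows "(a \<ominus> sg b \<ominus> k) \<otimes> sg (b \<ominus> sg a) = pre (a \<ominus> k) \<otimes> sg b \<otimes> sg (b \<ominus> sg a)"
proof -
  let ?a = "a \<cdot> fstA G NN" and ?k = "k \<cdot> fstA G NN" and ?b = "sndA G NN"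
  have "(?a \<ominus> sg ?b \<ominus> ?k) \<otimes> sg (?b \<ominus> sg ?a) = pre (?a \<ominus> ?k) \<otimes> sg ?b \<otimes> sg (?b \<ominus> sg ?a)"
    by (rule nat_cases_eq[where G = G and B = NN])
      (use assms in \<open>simp_all add: cat_simps arith_simps zero_sub mul_one pred_sub zero_add\<close>)
  from this[THEN arg_cong, of "\<lambda>h. h \<cdot> \<langle>idA G, b\<rangle>"] show ?thesis
    using assms by (simp add: cat_simps)
qed

lemma diag_step_fst_sub_pred_guard:
  assumes "hom a G NN" "hom b G NN" "hom m G NN"
  shows "(a \<ominus> sg b \<ominus> pre m) \<otimes> sg (b \<ominus> sg a) = ((a \<ominus> m) \<otimes> sg b \<ominus> neg m) \<otimes> sg (b \<ominus> sg a)"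
proof -
  let ?a = "a \<cdot> fstA G NN" and ?b = "b \<cdot> fstA G NN" and ?m = "sndA G NN"
  have "(?a \<ominus> sg ?b \<ominus> pre ?m) \<otimes> sg (?b \<ominus> sg ?a) = ((?a \<ominus> ?m) \<otimes> sg ?b \<ominus> neg ?m) \<otimes> sg (?b \<ominus> sg ?a)"
    by (rule nat_cases_eq[where G = G and B = NN])
      (use assms in \<open>simp_all add: cat_simps arith_simps diag_step_fst_sub_guard
        diag_step_fst_guard pred_mul_sg\<close>)
  from this[THEN arg_cong, of "\<lambda>h. h \<cdot> \<langle>idA G, m\<rangle>"] show ?thesis
    using assms by (simp add: cat_simps)
qed

lemma comp_diag_step:
  assumes F: "hom F (Prod NN NN) B" and inv: "diag_invariant F"
  shows "F \<cdot> diag_step = F"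
proof -
  have shift: "F \<cdot> \<langle>suc px, suc py\<rangle> = F"
    using inv by (simp add: diag_invariant_def)
  have off_axis: "F \<cdot> \<langle>pre px, suc py \<ominus> sg px\<rangle> = F \<cdot> \<langle>px, suc py\<rangle>"
    by (rule nat_cases_eq_fst[where B = B])
      (use F shift in \<open>simp_all add: cat_simps arith_simps\<close>)
  show ?thesis
    by (rule nat_cases_eq[where G = NN and B = B])
      (use F off_axis in \<open>simp_all add: cat_simps arith_simps zero_sub diag_step_def\<close>)
qed

lemma comp_iter_diag_step:
  assumes F: "hom F (Prod NN NN) B" and inv: "diag_invariant F"
  shows "F \<cdot> iterA diag_step = F \<cdot> fstA (Prod NN NN) NN"
proof -
  have step: "F \<cdot> diag_step \<cdot> X = F \<cdot> X" if "hom X G (Prod NN NN)" for X G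
    using comp_diag_step[OF F inv] that F by (simp add: comp_assoc[symmetric])
  show ?thesis
    by (rule prim_rec_unique[where G = "Prod NN NN" and B = B
          and St = "sndA (Prod (Prod NN NN) NN) B"])
      (use F step in \<open>simp_all add: cat_simps iter_zero iter_succ\<close>)
qed

definition diag_descent :: arr where
  "diag_descent = iterA diag_step \<cdot> \<langle>idA (Prod NN NN), px\<rangle>"

lemma hom_diag_descent[simp]: "hom diag_descent (Prod NN NN) (Prod NN NN)"
  by (simp add: diag_descent_def)

text \<open>The invariant after \<open>t\<close> steps, from \<open>(x, y)\<close> to \<open>(a, b)\<close>, is \<open>(a \<ominus> (x \<ominus> t)) \<otimes> sg b = 0\<close>:
  the first coordinate drops to \<open>x \<ominus> t\<close> unless the second has already reached \<open>0\<close>.\<close>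

lemma diag_descent_reaches_axis: "px \<cdot> diag_descent \<otimes> sg (py \<cdot> diag_descent) = zero_at (Prod NN NN)"
proof -
  let ?x = "px \<cdot> fstA (Prod NN NN) NN" and ?t = "sndA (Prod NN NN) NN"
  let ?a = "px \<cdot> iterA diag_step" and ?b = "py \<cdot> iterA diag_step"
  let ?inv = "(?a \<ominus> (?x \<ominus> ?t)) \<otimes> sg ?b"
  let ?w = "fstA (Prod (Prod NN NN) NN) NN" and ?v = "sndA (Prod (Prod NN NN) NN) NN"
  have "?inv = zero_at (Prod (Prod NN NN) NN)"
    by (rule prim_rec_unique[where G = "Prod NN NN" and B = NN
          and St = "(?v \<ominus> neg ((?x \<ominus> ?t) \<cdot> ?w)) \<otimes> sg ((?b \<ominus> sg ?a) \<cdot> ?w)"])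
      (simp_all add: cat_simps arith_simps iter_zero iter_succ sub_self zero_mul zero_sub
        diag_step_def diag_step_fst_sub_pred_guard)
  from this[THEN arg_cong, of "\<lambda>h. h \<cdot> \<langle>idA (Prod NN NN), px\<rangle>"] show ?thesis
    by (simp add: diag_descent_def cat_simps sub_self arith_simps)
qed

text \<open>Fixes the axes and sends a point with both coordinates positive to the first axis.\<close>

definition axis_retract :: arr where
  "axis_retract = \<langle>px, py \<otimes> neg (px \<otimes> sg py)\<rangle>"

lemma hom_axis_retract[simp]: "hom axis_retract (Prod NN NN) (Prod NN NN)"
  by (simp add: axis_retract_def)

lemma axis_retract_diag_descent: "axis_retract \<cdot> diag_descent = diag_descent"
  using diag_descent_reaches_axis
  by (simp add: axis_retract_def cat_simps arith_simps mul_one zero_add)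

lemma comp_axis_retract_eq:
  assumes F: "hom F (Prod NN NN) B" and K: "hom K (Prod NN NN) B"
    and axis1: "F \<cdot> \<langle>idA NN, zero_at NN\<rangle> = K \<cdot> \<langle>idA NN, zero_at NN\<rangle>"
    and axis2: "F \<cdot> \<langle>zero_at NN, idA NN\<rangle> = K \<cdot> \<langle>zero_at NN, idA NN\<rangle>"
  shows "F \<cdot> axis_retract = K \<cdot> axis_retract"
proof -
  have axis1_at: "F \<cdot> \<langle>a, zero_at G\<rangle> = K \<cdot> \<langle>a, zero_at G\<rangle>" if a: "hom a G NN" for a G
    using axis1[THEN arg_cong, of "\<lambda>h. h \<cdot> a"] a F K by (simp add: cat_simps)
  have off_axis:
    "F \<cdot> \<langle>suc px, py \<otimes> neg (suc px \<otimes> sg py)\<rangle> = K \<cdot> \<langle>suc px, py \<otimes> neg (suc px \<otimes> sg py)\<rangle>"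
    by (rule nat_cases_eq[where G = NN and B = B])
      (use F K in \<open>simp_all add: cat_simps arith_simps axis1_at zero_mul mul_one zero_add\<close>)
  show ?thesis
    by (rule nat_cases_eq_fst[where B = B])
      (use F K axis2 off_axis in
        \<open>simp_all add: cat_simps arith_simps axis_retract_def zero_mul mul_one zero_add\<close>)
qed

lemma diag_invariant_eq:
  assumes F: "hom F (Prod NN NN) B" and K: "hom K (Prod NN NN) B"
    and "diag_invariant F" "diag_invariant K"
    and "F \<cdot> \<langle>idA NN, zero_at NN\<rangle> = K \<cdot> \<langle>idA NN, zero_at NN\<rangle>"
    and "F \<cdot> \<langle>zero_at NN, idA NN\<rangle> = K \<cdot> \<langle>zero_at NN, idA NN\<rangle>"
  shows "F = K"
proof -
  have descent: "H \<cdot> diag_descent = H" if H: "hom H (Prod NN NN) B" "diag_invariant H" for H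
    using comp_iter_diag_step[OF H] H
    by (simp add: diag_descent_def comp_assoc[symmetric] cat_simps)
  have "F = F \<cdot> axis_retract \<cdot> diag_descent"
    using descent[OF F] assms(3) by (simp add: axis_retract_diag_descent)
  also have "\<dots> = K \<cdot> axis_retract \<cdot> diag_descent"
    using comp_axis_retract_eq[OF F K assms(5,6)] F K by (simp add: comp_assoc[symmetric])
  also have "\<dots> = K"
    using descent[OF K] assms(4) by (simp add: axis_retract_diag_descent)
  finally show ?thesis .
qed

section \<open>Truncated subtraction determines equality\<close>

lemma succ_sub:
  assumes x: "hom x G NN" and y: "hom y G NN"
  shows "suc y \<ominus> x = y \<ominus> x \<oplus> neg (x \<ominus> y)"
proof -
  have "suc py \<ominus> px = py \<ominus> px \<oplus> neg (px \<ominus> py)"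
    by (rule diag_invariant_eq[where B = NN])
      (simp_all add: diag_invariant_def cat_simps arith_simps one_sub zero_sub zero_add
        succ_sub_succ del: sub_succ)
  from this[THEN arg_cong, of "\<lambda>h. h \<cdot> \<langle>x, y\<rangle>"] show ?thesis
    using x y by (simp add: cat_simps)
qed

lemma add_sub_commute:
  assumes x: "hom x G NN" and y: "hom y G NN"
  shows "y \<oplus> (x \<ominus> y) = x \<oplus> (y \<ominus> x)"
proof -
  let ?x = "x \<cdot> fstA G NN" and ?n = "sndA G NN"
  let ?v = "sndA (Prod G NN) NN" and ?w = "fstA (Prod G NN) NN"
  have "?n \<oplus> (?x \<ominus> ?n) = ?x \<oplus> (?n \<ominus> ?x)"
    by (rule prim_rec_unique[where G = G and B = NN and St = "?v \<oplus> neg ((?x \<ominus> ?n) \<cdot> ?w)"])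
      (use x in \<open>simp_all add: cat_simps arith_simps zero_add zero_sub succ_add add_assoc
        add_neg_eq_suc_pred succ_sub\<close>)
  from this[THEN arg_cong, of "\<lambda>h. h \<cdot> \<langle>idA G, y\<rangle>"] show ?thesis
    using x y by (simp add: cat_simps)
qed

lemma eq_if_sub_eq_zero:
  assumes "hom x G NN" "hom y G NN" "x \<ominus> y = zero_at G" "y \<ominus> x = zero_at G"
  shows "x = y"
  using add_sub_commute[of x G y] assms by (simp add: arith_simps)

lemma zero_if_neg_eq_one:
  assumes w: "hom w G NN" and "neg w = one_at G"
  shows "w = zero_at G"
  using mul_sg[OF w] assms by (simp add: arith_simps)

lemma conj_eq_one:
  assumes u: "hom u G NN" and v: "hom v G NN" and "sg u = u" "sg v = v"
    and conj: "sg (u \<otimes> v) = one_at G"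
  shows "u = one_at G \<and> v = one_at G"
proof
  have "neg (neg u) \<otimes> sg (neg (neg u) \<otimes> v) = sg (neg (neg u) \<otimes> v)"
    using neg_mul_sg[of "neg u" G v] u v by simp
  then show u_one: "u = one_at G"
    using u conj \<open>sg u = u\<close> by (simp add: mul_one)
  show "v = one_at G"
    using v conj \<open>sg v = v\<close> by (simp add: u_one one_mul)
qed

section \<open>The equality predicates\<close>

abbreviation eqA :: "obj \<Rightarrow> arr" where "eqA B \<equiv> abs_arr (eqpred B)"

lemma typed_eqpred: "typed (eqpred B) (Prod B B) NN"
  by (induction B)
    (simp_all add: typed_iff_well_typed trueA_def one_def eqNm_def andm_def signm_def leqm_def
      negm_def multm_def monus_def predm_def addm_def)

lemma hom_eqA: "hom (eqA B) (Prod B B) NN"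
  using hom_abs_arr[OF typed_eqpred] .

lemma eqA_One: "hom x G One \<Longrightarrow> hom y G One \<Longrightarrow> eqA One \<cdot> \<langle>x, y\<rangle> = one_at G"
  by (simp add: abs_arr_simps trueA_def one_def cat_simps)

lemma eqA_NN:
  "hom x G NN \<Longrightarrow> hom y G NN \<Longrightarrow> eqA NN \<cdot> \<langle>x, y\<rangle> = sg (neg (x \<ominus> y) \<otimes> neg (y \<ominus> x))"
  by (simp add: abs_arr_simps abs_arr_arith eqNm_def andm_def signm_def leqm_def cat_simps)

lemma eqA_Prod:
  assumes "hom x G (Prod A B)" "hom y G (Prod A B)"
  shows "eqA (Prod A B) \<cdot> \<langle>x, y\<rangle>
    = sg (eqA A \<cdot> \<langle>fstA A B \<cdot> x, fstA A B \<cdot> y\<rangle> \<otimes> eqA B \<cdot> \<langle>sndA A B \<cdot> x, sndA A B \<cdot> y\<rangle>)"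
  using assms hom_eqA by (simp add: abs_arr_simps abs_arr_arith andm_def signm_def cat_simps)

declare eqpred.simps[simp del]

lemma sg_eqA: "hom x G B \<Longrightarrow> hom y G B \<Longrightarrow> sg (eqA B \<cdot> \<langle>x, y\<rangle>) = eqA B \<cdot> \<langle>x, y\<rangle>"
  using hom_eqA by (cases B) (simp_all add: eqA_One eqA_NN eqA_Prod arith_simps neg_sg)

lemma eq_if_eqA_true:
  "hom f A B \<Longrightarrow> hom g A B \<Longrightarrow> eqA B \<cdot> \<langle>f, g\<rangle> = one_at A \<Longrightarrow> f = g"
proof (induction B arbitrary: f g)
  case One
  then show ?case using terminal_unique[of f] terminal_unique[of g] by simp
next
  case NN
  have "sg (neg (f \<ominus> g) \<otimes> neg (g \<ominus> f)) = one_at A"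
    using NN eqA_NN[of f A g] by simp
  then have "neg (f \<ominus> g) = one_at A" "neg (g \<ominus> f) = one_at A"
    using conj_eq_one[of "neg (f \<ominus> g)" A "neg (g \<ominus> f)"] NN.prems by (simp_all add: neg_sg)
  then have "f \<ominus> g = zero_at A" "g \<ominus> f = zero_at A"
    using zero_if_neg_eq_one[of "f \<ominus> g" A] zero_if_neg_eq_one[of "g \<ominus> f" A] NN.prems by simp_all
  with NN.prems show ?case
    using eq_if_sub_eq_zero[of f A g] by simp
next
  case (Prod B1 B2)
  let ?p = "eqA B1 \<cdot> \<langle>fstA B1 B2 \<cdot> f, fstA B1 B2 \<cdot> g\<rangle>"
  let ?q = "eqA B2 \<cdot> \<langle>sndA B1 B2 \<cdot> f, sndA B1 B2 \<cdot> g\<rangle>"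
  have "sg (?p \<otimes> ?q) = one_at A"
    using Prod.prems eqA_Prod[of f A B1 B2 g] by simp
  then have p: "?p = one_at A" and q: "?q = one_at A"
    using Prod.prems hom_eqA conj_eq_one[of ?p A ?q] by (simp_all add: sg_eqA)
  have "fstA B1 B2 \<cdot> f = fstA B1 B2 \<cdot> g" "sndA B1 B2 \<cdot> f = sndA B1 B2 \<cdot> g"
    using Prod.IH(1)[OF _ _ p] Prod.IH(2)[OF _ _ q] Prod.prems by simp_all
  then have "\<langle>fstA B1 B2 \<cdot> f, sndA B1 B2 \<cdot> f\<rangle> = \<langle>fstA B1 B2 \<cdot> g, sndA B1 B2 \<cdot> g\<rangle>"
    by simp
  then show ?case
    using Prod.prems by (simp add: pair_fst_snd)
qed

theorem mainTheorem2:
  assumes "typed f A B" and "typed g A B"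
    and "eqv (trueA A) (Comp (Comp (eqpred B) (times f g A A)) (Delta A)) A NN"
  shows "eqv f g A B"
proof -
  have f: "hom (abs_arr f) A B" and g: "hom (abs_arr g) A B"
    using assms(1,2) by (simp_all add: hom_abs_arr)
  have "one_at A = abs_arr (trueA A)"
    by (simp add: abs_arr_simps trueA_def one_def cat_simps)
  also have "\<dots> = abs_arr (Comp (Comp (eqpred B) (times f g A A)) (Delta A))"
    using assms(3) eqv_iff_abs_arr_eq[of "trueA A" A NN]
    by (simp add: typed_iff_well_typed trueA_def one_def)
  also have "\<dots> = (eqA B \<cdot> \<langle>abs_arr f \<cdot> fstA A A, abs_arr g \<cdot> sndA A A\<rangle>) \<cdot> \<langle>idA A, idA A\<rangle>"
    by (simp add: abs_arr_simps times_def Delta_def)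
  also have "\<dots> = eqA B \<cdot> \<langle>abs_arr f, abs_arr g\<rangle>"
    using f g hom_eqA by (simp add: cat_simps)
  finally have "eqA B \<cdot> \<langle>abs_arr f, abs_arr g\<rangle> = one_at A" ..
  then have "abs_arr f = abs_arr g"
    by (rule eq_if_eqA_true[OF f g])
  then show ?thesis
    using assms(1) by (simp add: eqv_iff_abs_arr_eq)
qed

end
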